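(* For every $n\geq0$, the dimension of the $n$th graded component of the quotient $\mathbf{ASM}/\mathcal{I}_{\operatorname{io}}$ is $\left\lfloor\frac{(n-1)^2}{4}\right\rfloor+1$.
   Context: An ASM of size $n$ is an $n\times n$ matrix over $\{0,1,-1\}$ whose nonzero entries in every row and column alternate in sign, starting and ending with $+1$; $\operatorname{io}(\delta)$ is the number of entries equal to $-1$ in $\delta$. $\mathbf{ASM}$ is the graded vector space (over $\mathbb{K}$ of characteristic zero) with basis $(\mathbf{F}_{M^\delta})$ indexed by ASMs $\delta$, the degree of $\mathbf{F}_{M^\delta}$ being the size of $\delta$. $\mathcal{I}_{\operatorname{io}}$ is the subspace spanned by all $\mathbf{F}_{M^{\delta_1}}-\mathbf{F}_{M^{\delta_2}}$ with $\delta_1,\delta_2$ ASMs of the same size satisfying $\operatorname{io}(\delta_1)=\operatorname{io}(\delta_2)$; the quotient is graded by size. *)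

theory Defs
  imports Main "HOL.Vector_Spaces" "HOL-Library.Function_Algebras"
begin

text \<open>Matrices of size n are represented as functions nat => nat => int,
  with entries outside the index range 0..<n required to be zero.\<close>

type_synonym mat = "nat \<Rightarrow> nat \<Rightarrow> int"

definition alternating_pm :: "int list \<Rightarrow> bool" where
  "alternating_pm xs \<longleftrightarrow> odd (length xs) \<and>
     (\<forall>k < length xs. xs ! k = (if even k then 1 else -1))"

definition is_ASM :: "nat \<Rightarrow> mat \<Rightarrow> bool" where
  "is_ASM n A \<longleftrightarrow>
     (\<forall>i j. A i j \<in> {0, 1, -1}) \<and>
     (\<forall>i j. (n \<le> i \<or> n \<le> j) \<longrightarrow> A i j = 0) \<and>
     (\<forall>i < n. alternating_pm (filter (\<lambda>x. x \<noteq> 0) (map (\<lambda>j. A i j) [0..<n]))) \<and>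
     (\<forall>j < n. alternating_pm (filter (\<lambda>x. x \<noteq> 0) (map (\<lambda>i. A i j) [0..<n])))"

definition ASMs :: "nat \<Rightarrow> mat set" where
  "ASMs n = {A. is_ASM n A}"

definition io :: "nat \<Rightarrow> mat \<Rightarrow> nat" where
  "io n A = card {(i, j). i < n \<and> j < n \<and> A i j = -1}"

text \<open>The vector space ASM: finitely supported functions from matrices to a field 'k;
  the basis element F_{M^delta} is the indicator of delta.\<close>
definition fscale :: "'k::field \<Rightarrow> (mat \<Rightarrow> 'k) \<Rightarrow> (mat \<Rightarrow> 'k)" where
  "fscale c f = (\<lambda>x. c * f x)"

definition F :: "mat \<Rightarrow> (mat \<Rightarrow> 'k::field)" where
  "F A = (\<lambda>B. if B = A then 1 else 0)"

definition ASM_comp :: "nat \<Rightarrow> (mat \<Rightarrow> 'k::field) set" where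
  "ASM_comp n = module.span fscale (F ` ASMs n)"

text \<open>Degree-n component of the ideal I_io (its generators are homogeneous).\<close>
definition Iio_comp :: "nat \<Rightarrow> (mat \<Rightarrow> 'k::field) set" where
  "Iio_comp n = module.span fscale
     {F A1 - F A2 | A1 A2. A1 \<in> ASMs n \<and> A2 \<in> ASMs n \<and> io n A1 = io n A2}"

text \<open>Dimension of the degree-n component of the quotient ASM / I_io,
  i.e. dim(ASM_n) - dim(I_io intersect ASM_n) (all finite-dimensional).\<close>
definition quot_dim :: "'k::field itself \<Rightarrow> nat \<Rightarrow> nat" where
  "quot_dim _ n = vector_space.dim (fscale :: 'k \<Rightarrow> _) (ASM_comp n)
                  - vector_space.dim (fscale :: 'k \<Rightarrow> _) (Iio_comp n)"

lemma vector_space_fscale: "vector_space (fscale :: 'k::field \<Rightarrow> (mat \<Rightarrow> 'k) \<Rightarrow> _)"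
  by unfold_locales (auto simp: fscale_def fun_eq_iff algebra_simps)

end

theory Submission
  imports Defs
begin

(*
  Modulo I_io the basis vector F_delta depends only on io(delta), and the classes belonging to
  different values of io stay independent; so the dimension in degree n is the number of values
  io takes on ASMs of size n.

  Reading each row and column through its partial sums (which must stay in {0, 1} and end at 1),
  the column prefix sums over the first i rows form a 0/1 vector with exactly i ones.  A -1 in
  row i sits where this vector drops from 1 to 0, so row i has at most min(i, n - 1 - i) entries
  -1, and summing gives io <= floor((n-1)^2/4).  Conversely, with a = floor((n-1)/2) and
  b = n - 1 - a, the "diamond" ASM has its -1 entries on an a x b checkerboard, and capping its
  corner-sum matrix keeps exactly the first q full rows of that checkerboard plus r cells of the
  next one, which realises every k = q b + r <= a b = floor((n-1)^2/4).
*)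

section \<open>Alternating sign matrices through partial sums\<close>

(* s is the sum of the entries read so far. *)
fun alternates_from :: "int \<Rightarrow> int list \<Rightarrow> bool" where
  "alternates_from s [] \<longleftrightarrow> s = 1"
| "alternates_from s (y # ys) \<longleftrightarrow> y = (if s = 0 then 1 else -1) \<and> alternates_from (1 - s) ys"

lemma alternates_from_iff_nth:
  "(alternates_from 0 ys \<longleftrightarrow> odd (length ys) \<and> (\<forall>k<length ys. ys ! k = (if even k then 1 else -1))) \<and>
   (alternates_from 1 ys \<longleftrightarrow> even (length ys) \<and> (\<forall>k<length ys. ys ! k = (if even k then -1 else 1)))"
  by (induction ys) (auto simp: All_less_Suc2)

lemma alternating_pm_iff_alternates_from: "alternating_pm ys \<longleftrightarrow> alternates_from 0 ys"
  using alternates_from_iff_nth[of ys] by (simp add: alternating_pm_def)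

lemma alternates_from_nonzero_iff_prefix_sums:
  assumes "set xs \<subseteq> {-1, 0, 1}" and "s \<in> {0, 1}"
  shows "alternates_from s (filter (\<lambda>x. x \<noteq> 0) xs) \<longleftrightarrow>
    (\<forall>m. s + sum_list (take m xs) \<in> {0, 1}) \<and> s + sum_list xs = 1"
  using assms
proof (induction xs arbitrary: s)
  case (Cons x xs)
  have all_nat: "(\<forall>m. P m) \<longleftrightarrow> P 0 \<and> (\<forall>m. P (Suc m))" for P :: "nat \<Rightarrow> bool"
    by (metis not0_implies_Suc)
  have prefixes: "(\<forall>m. s + sum_list (take m (x # xs)) \<in> {0, 1}) \<longleftrightarrow>
      s \<in> {0, 1} \<and> (\<forall>m. (s + x) + sum_list (take m xs) \<in> {0, 1})"
    by (subst all_nat) (simp add: add.assoc)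
  have xs: "set xs \<subseteq> {-1, 0, 1}" using Cons.prems by simp
  from Cons.prems consider "x = 0" | "x = 1" | "x = -1" by auto
  then show ?case
    using Cons.IH[OF xs, of "s + x"] Cons.prems(2) prefixes by cases (auto dest: spec[of _ 0])
qed simp

lemma alternating_pm_nonzero_iff_prefix_sums:
  assumes "\<forall>j. f j \<in> {0, 1, -1}"
  shows "alternating_pm (filter (\<lambda>x. x \<noteq> 0) (map f [0..<n])) \<longleftrightarrow>
    (\<forall>m\<le>n. (\<Sum>j<m. f j) \<in> {0, 1}) \<and> (\<Sum>j<n. f j) = 1"
proof -
  have "set (map f [0..<n]) \<subseteq> {-1, 0, 1}" using assms by auto
  then have "alternating_pm (filter (\<lambda>x. x \<noteq> 0) (map f [0..<n])) \<longleftrightarrow>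
      (\<forall>m. sum_list (take m (map f [0..<n])) \<in> {0, 1}) \<and> sum_list (map f [0..<n]) = 1"
    using alternates_from_nonzero_iff_prefix_sums[of "map f [0..<n]" 0]
    by (simp add: alternating_pm_iff_alternates_from)
  also have "\<dots> \<longleftrightarrow> (\<forall>m. (\<Sum>j<min m n. f j) \<in> {0, 1}) \<and> (\<Sum>j<n. f j) = 1"
  proof -
    have "take m [0..<n] = [0..<min m n]" for m by (simp add: take_upt min_def)
    then show ?thesis
      by (simp add: take_map interv_sum_list_conv_sum_set_nat lessThan_atLeast0)
  qed
  also have "\<dots> \<longleftrightarrow> (\<forall>m\<le>n. (\<Sum>j<m. f j) \<in> {0, 1}) \<and> (\<Sum>j<n. f j) = 1"
  proof -
    have "(\<forall>m. P (min m n)) \<longleftrightarrow> (\<forall>m\<le>n. P m)" for P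
      by (metis min.absorb1 min.cobounded2)
    from this[of "\<lambda>m. (\<Sum>j<m. f j) \<in> {0, 1}"] show ?thesis by (simp only:)
  qed
  finally show ?thesis .
qed

lemma is_ASM_iff_prefix_sums:
  "is_ASM n A \<longleftrightarrow> (\<forall>i j. A i j \<in> {0, 1, -1}) \<and> (\<forall>i j. n \<le> i \<or> n \<le> j \<longrightarrow> A i j = 0) \<and>
     (\<forall>i<n. (\<forall>m\<le>n. (\<Sum>j<m. A i j) \<in> {0, 1}) \<and> (\<Sum>j<n. A i j) = 1) \<and>
     (\<forall>j<n. (\<forall>m\<le>n. (\<Sum>i<m. A i j) \<in> {0, 1}) \<and> (\<Sum>i<n. A i j) = 1)"
proof (cases "\<forall>i j. A i j \<in> {0, 1, -1}")
  case True
  have "alternating_pm (filter (\<lambda>x. x \<noteq> 0) (map (\<lambda>j. A i j) [0..<n])) \<longleftrightarrow>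
      (\<forall>m\<le>n. (\<Sum>j<m. A i j) \<in> {0, 1}) \<and> (\<Sum>j<n. A i j) = 1" for i
    using True by (intro alternating_pm_nonzero_iff_prefix_sums) blast
  moreover have "alternating_pm (filter (\<lambda>x. x \<noteq> 0) (map (\<lambda>i. A i j) [0..<n])) \<longleftrightarrow>
      (\<forall>m\<le>n. (\<Sum>i<m. A i j) \<in> {0, 1}) \<and> (\<Sum>i<n. A i j) = 1" for j
    using True by (intro alternating_pm_nonzero_iff_prefix_sums) blast
  ultimately show ?thesis unfolding is_ASM_def by (simp only:)
next
  case False
  then show ?thesis unfolding is_ASM_def by (simp only: simp_thms)
qed

section \<open>Corner-sum matrices\<close>

(* If c i j is the sum of the entries of A in rows < i and columns < j, then A is the
   mixed difference of c. *)
definition corner_diff :: "nat \<Rightarrow> (nat \<Rightarrow> nat \<Rightarrow> int) \<Rightarrow> mat" where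
  "corner_diff n c i j =
     (if i < n \<and> j < n then c (Suc i) (Suc j) - c i (Suc j) - c (Suc i) j + c i j else 0)"

lemma corner_diff_transpose: "corner_diff n (\<lambda>i j. c j i) j i = corner_diff n c i j"
  by (simp add: corner_diff_def)

lemma corner_diff_row_prefix_sums:
  assumes "\<forall>i\<le>n. c i 0 = 0" and "\<forall>i\<le>n. c i n = int i"
    and "\<forall>i<n. \<forall>j\<le>n. c (Suc i) j - c i j \<in> {0, 1}"
  shows "\<forall>i<n. (\<forall>m\<le>n. (\<Sum>j<m. corner_diff n c i j) \<in> {0, 1}) \<and> (\<Sum>j<n. corner_diff n c i j) = 1"
proof (intro allI impI)
  fix i assume i: "i < n"
  have sum_eq: "(\<Sum>j<m. corner_diff n c i j) = c (Suc i) m - c i m" if "m \<le> n" for m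
  proof -
    have "(\<Sum>j<m. corner_diff n c i j) = (\<Sum>j<m. (c (Suc i) (Suc j) - c i (Suc j)) - (c (Suc i) j - c i j))"
      using i that by (intro sum.cong) (auto simp: corner_diff_def)
    also have "\<dots> = c (Suc i) m - c i m - (c (Suc i) 0 - c i 0)"
      by (rule sum_lessThan_telescope)
    finally show ?thesis using assms(1) i by simp
  qed
  show "(\<forall>m\<le>n. (\<Sum>j<m. corner_diff n c i j) \<in> {0, 1}) \<and> (\<Sum>j<n. corner_diff n c i j) = 1"
  proof (intro conjI allI impI)
    fix m assume "m \<le> n"
    then show "(\<Sum>j<m. corner_diff n c i j) \<in> {0, 1}" using sum_eq assms(3) i by simp
  next
    show "(\<Sum>j<n. corner_diff n c i j) = 1" using sum_eq[of n] assms(2) i by simp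
  qed
qed

lemma is_ASM_corner_diff:
  assumes "\<forall>i\<le>n. c i 0 = 0" and "\<forall>j\<le>n. c 0 j = 0"
    and "\<forall>i\<le>n. c i n = int i" and "\<forall>j\<le>n. c n j = int j"
    and col_steps: "\<forall>i\<le>n. \<forall>j<n. c i (Suc j) - c i j \<in> {0, 1}"
    and row_steps: "\<forall>i<n. \<forall>j\<le>n. c (Suc i) j - c i j \<in> {0, 1}"
  shows "is_ASM n (corner_diff n c)"
proof -
  have "\<forall>i j. corner_diff n c i j \<in> {0, 1, -1}"
  proof (intro allI)
    fix i j
    show "corner_diff n c i j \<in> {0, 1, -1}"
    proof (cases "i < n \<and> j < n")
      case True
      then have "c (Suc i) (Suc j) - c i (Suc j) \<in> {0, 1}" "c (Suc i) j - c i j \<in> {0, 1}"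
        using row_steps by auto
      then show ?thesis using True by (auto simp: corner_diff_def)
    qed (auto simp: corner_diff_def)
  qed
  moreover have "\<forall>j<n. (\<forall>m\<le>n. (\<Sum>i<m. corner_diff n c i j) \<in> {0, 1}) \<and> (\<Sum>i<n. corner_diff n c i j) = 1"
  proof -
    have "\<forall>j<n. \<forall>i\<le>n. c i (Suc j) - c i j \<in> {0, 1}" using col_steps by blast
    from corner_diff_row_prefix_sums[of n "\<lambda>i j. c j i", OF assms(2,4) this]
    show ?thesis unfolding corner_diff_transpose[of n c] .
  qed
  moreover have "\<forall>i j. n \<le> i \<or> n \<le> j \<longrightarrow> corner_diff n c i j = 0"
    by (simp add: corner_diff_def)
  ultimately show ?thesis
    unfolding is_ASM_iff_prefix_sums using corner_diff_row_prefix_sums[OF assms(1,3) row_steps]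
    by (intro conjI)
qed

section \<open>Upper bound for the number of negative entries\<close>

lemma card_eq_sum_of_01_valued:
  assumes "finite S" and "\<forall>x\<in>S. g x \<in> {0, 1 :: int}"
  shows "int (card {x\<in>S. g x = 1}) = (\<Sum>x\<in>S. g x)"
proof -
  have "(\<Sum>x\<in>S. g x) = (\<Sum>x\<in>S. if g x = 1 then 1 else 0)"
    using assms(2) by (intro sum.cong) auto
  also have "\<dots> = int (card {x\<in>S. g x = 1})"
    using assms(1) by (simp add: sum.If_cases Int_def)
  finally show ?thesis ..
qed

lemma ASM_card_col_prefix_sums_eq_1:
  assumes "is_ASM n A" and "k \<le> n"
  shows "card {j\<in>{..<n}. (\<Sum>r<k. A r j) = 1} = k"
proof -
  note ASM = assms(1)[unfolded is_ASM_iff_prefix_sums]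
  have "(\<Sum>j<n. \<Sum>r<k. A r j) = (\<Sum>r<k. \<Sum>j<n. A r j)" by (rule sum.swap)
  also have "\<dots> = int k" using ASM assms(2) by simp
  finally have "(\<Sum>j<n. \<Sum>r<k. A r j) = int k" .
  moreover have "\<forall>j\<in>{..<n}. (\<Sum>r<k. A r j) \<in> {0, 1}" using ASM assms(2) by simp
  ultimately show ?thesis using card_eq_sum_of_01_valued[of "{..<n}" "\<lambda>j. \<Sum>r<k. A r j"] by simp
qed

lemma ASM_row_card_neg_le:
  assumes "is_ASM n A" and "i < n"
  shows "card {j. j < n \<and> A i j = -1} \<le> min i (n - 1 - i)"
proof -
  define X where "X k = {j\<in>{..<n}. (\<Sum>r<k. A r j) = 1}" for k
  have card_X: "card (X k) = k" if "k \<le> n" for k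
    unfolding X_def using ASM_card_col_prefix_sums_eq_1[OF assms(1) that] .
  have "{j. j < n \<and> A i j = -1} \<subseteq> X i - X (Suc i)"
  proof
    fix j assume j: "j \<in> {j. j < n \<and> A i j = -1}"
    have "\<forall>m\<le>n. (\<Sum>r<m. A r j) \<in> {0, 1}"
      using assms(1) j by (simp add: is_ASM_iff_prefix_sums)
    then have "(\<Sum>r<i. A r j) \<in> {0, 1}" "(\<Sum>r<i. A r j) + A i j \<in> {0, 1}"
      using assms(2) by (auto dest: spec[of _ "Suc i"])
    with j show "j \<in> X i - X (Suc i)" by (auto simp: X_def)
  qed
  then have card_le: "card {j. j < n \<and> A i j = -1} \<le> card (X i - X (Suc i))"
    by (intro card_mono) (auto simp: X_def)
  have "card (X i - X (Suc i)) \<le> card (X i)" by (intro card_mono) (auto simp: X_def)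
  moreover have "card (X i - X (Suc i)) \<le> card ({..<n} - X (Suc i))"
    by (intro card_mono) (auto simp: X_def)
  moreover have "card ({..<n} - X (Suc i)) = n - Suc i"
    using card_Diff_subset[of "X (Suc i)" "{..<n}"] card_X[of "Suc i"] assms(2)
    by (auto simp: X_def)
  ultimately show ?thesis using card_le card_X[of i] assms(2) by simp
qed

lemma io_eq_sum_rows: "io n A = (\<Sum>i<n. card {j. j < n \<and> A i j = -1})"
proof -
  have "{(i, j). i < n \<and> j < n \<and> A i j = -1} = Sigma {..<n} (\<lambda>i. {j. j < n \<and> A i j = -1})"
    by auto
  then show ?thesis unfolding io_def by (simp add: card_SigmaI)
qed

lemma sum_min_dist_to_ends: "(\<Sum>i<n. min i (n - 1 - i)) = (n - 1)\<^sup>2 div 4" for n :: nat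
proof (induction n rule: nat_induct2)
  case (step m)
  have "(\<Sum>i<m + 2. min i (m + 1 - i)) = (\<Sum>i<Suc m. min i (Suc m - i))"
    by simp
  also have "\<dots> = (\<Sum>i<m. min (Suc i) (m - i))"
    by (subst sum.lessThan_Suc_shift) simp
  also have "\<dots> = (\<Sum>i<m. min i (m - 1 - i) + 1)"
    by (intro sum.cong) auto
  also have "\<dots> = (m - 1)\<^sup>2 div 4 + m"
    by (subst sum.distrib, subst step) simp
  also have "\<dots> = (m + 1)\<^sup>2 div 4"
    by (cases m) (simp_all add: power2_eq_square algebra_simps)
  finally show ?case by simp
qed simp_all

lemma io_le_of_ASM:
  assumes "is_ASM n A"
  shows "io n A \<le> (n - 1)\<^sup>2 div 4"
  unfolding io_eq_sum_rows sum_min_dist_to_ends[symmetric]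
  using ASM_row_card_neg_le[OF assms] by (intro sum_mono) auto

section \<open>Truncated diamonds\<close>

(* For q = a and r = 0 this is the corner-sum matrix min(i, j, (i + j - a) div 2) of the
   diamond ASM, clipped below by i + j - n; the term with q and r lowers it so that only q full
   rows and r further cells of its checkerboard of -1 entries survive. *)
definition truncated_diamond :: "int \<Rightarrow> int \<Rightarrow> int \<Rightarrow> int \<Rightarrow> int \<Rightarrow> int \<Rightarrow> int" where
  "truncated_diamond n a q r i j =
     max (max 0 (i + j - n))
         (min (min i j) (min ((i + j - a) div 2) (max (j + q - a) (min (i + j - n + r) (j + q - a + 1)))))"

lemma max_diff_01: "a' - a \<in> {0, 1::int} \<Longrightarrow> b' - b \<in> {0, 1} \<Longrightarrow> max a' b' - max a b \<in> {0, 1}"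
  by (auto simp: max_def)

lemma min_diff_01: "a' - a \<in> {0, 1::int} \<Longrightarrow> b' - b \<in> {0, 1} \<Longrightarrow> min a' b' - min a b \<in> {0, 1}"
  by (auto simp: min_def)

lemma succ_div_2_diff: "(x + 1) div 2 - x div 2 \<in> {0, 1 :: int}"
  by (cases "even x") (auto elim!: evenE oddE)

lemma truncated_diamond_step_right:
  "truncated_diamond n a q r i (j + 1) - truncated_diamond n a q r i j \<in> {0, 1}"
proof -
  have "(i + (j + 1) - a) div 2 - (i + j - a) div 2 \<in> {0, 1}"
    using succ_div_2_diff[of "i + j - a"] by (simp add: algebra_simps)
  then show ?thesis unfolding truncated_diamond_def by (intro max_diff_01 min_diff_01) auto
qed

lemma truncated_diamond_step_down:
  "truncated_diamond n a q r (i + 1) j - truncated_diamond n a q r i j \<in> {0, 1}"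
proof -
  have "(i + 1 + j - a) div 2 - (i + j - a) div 2 \<in> {0, 1}"
    using succ_div_2_diff[of "i + j - a"] by (simp add: algebra_simps)
  then show ?thesis unfolding truncated_diamond_def by (intro max_diff_01 min_diff_01) auto
qed

lemma truncated_diamond_boundary:
  assumes "0 \<le> i" and "i \<le> n"
  shows "truncated_diamond n a q r i 0 = 0" and "truncated_diamond n a q r 0 i = 0"
    and "truncated_diamond n a q r i n = i" and "truncated_diamond n a q r n i = i"
  using assms by (simp_all add: truncated_diamond_def)

definition diamond_ASM :: "nat \<Rightarrow> nat \<Rightarrow> nat \<Rightarrow> nat \<Rightarrow> mat" where
  "diamond_ASM n a q r =
     corner_diff n (\<lambda>i j. truncated_diamond (int n) (int a) (int q) (int r) (int i) (int j))"

lemma is_ASM_diamond_ASM: "is_ASM n (diamond_ASM n a q r)"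
proof -
  have "int (Suc k) = int k + 1" for k by simp
  then show ?thesis
    unfolding diamond_ASM_def
    by (intro is_ASM_corner_diff)
      (simp_all only: truncated_diamond_step_right truncated_diamond_step_down simp_thms,
       simp_all add: truncated_diamond_boundary)
qed

lemma truncated_diamond_mixed_diff_neg_iff_parity:
  fixes n a q r i j m e :: int
  assumes "2 * a \<le> n - 1" and "n - 1 \<le> 2 * a + 1" and "0 \<le> q" and "q \<le> a"
    and "0 \<le> r" and "r \<le> n - 1 - a" and "0 \<le> i" and "i < n" and "0 \<le> j" and "j < n"
    and "i + j - a = 2 * m + e" and "e = 0 \<or> e = 1"
  shows "truncated_diamond n a q r (i + 1) (j + 1) - truncated_diamond n a q r i (j + 1)
      - truncated_diamond n a q r (i + 1) j + truncated_diamond n a q r i j = -1 \<longleftrightarrow>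
    e = 1 \<and> 0 \<le> m - j + a \<and> m - j + a < a \<and> 0 \<le> m \<and> m < n - 1 - a \<and>
    (m - j + a < q \<or> m - j + a = q \<and> n - 1 - a - r \<le> m)"
proof -
  have halves: "(i + 1 + (j + 1) - a) div 2 = m + 1" "(i + (j + 1) - a) div 2 = m + e"
    "(i + 1 + j - a) div 2 = m + e" "(i + j - a) div 2 = m"
    using assms(11,12) by auto
  (* Once the halvings are evaluated, both sides are piecewise-linear conditions. *)
  show ?thesis
    unfolding truncated_diamond_def halves using assms by smt
qed

lemma truncated_diamond_mixed_diff_neg_iff:
  fixes n a q r i j :: int
  assumes "2 * a \<le> n - 1" and "n - 1 \<le> 2 * a + 1" and "0 \<le> q" and "q \<le> a"
    and "0 \<le> r" and "r \<le> n - 1 - a" and "0 \<le> i" and "i < n" and "0 \<le> j" and "j < n"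
  shows "truncated_diamond n a q r (i + 1) (j + 1) - truncated_diamond n a q r i (j + 1)
      - truncated_diamond n a q r (i + 1) j + truncated_diamond n a q r i j = -1 \<longleftrightarrow>
    (\<exists>s t. i = 1 + s + t \<and> j = a + t - s \<and> 0 \<le> s \<and> s < a \<and> 0 \<le> t \<and> t < n - 1 - a \<and>
      (s < q \<or> s = q \<and> n - 1 - a - r \<le> t))"
proof -
  define m e where "m = (i + j - a) div 2" and "e = (i + j - a) mod 2"
  have me: "i + j - a = 2 * m + e" "e = 0 \<or> e = 1" unfolding m_def e_def by auto
  have "(\<exists>s t. i = 1 + s + t \<and> j = a + t - s \<and> 0 \<le> s \<and> s < a \<and> 0 \<le> t \<and> t < n - 1 - a \<and>
      (s < q \<or> s = q \<and> n - 1 - a - r \<le> t)) \<longleftrightarrow>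
    e = 1 \<and> 0 \<le> m - j + a \<and> m - j + a < a \<and> 0 \<le> m \<and> m < n - 1 - a \<and>
      (m - j + a < q \<or> m - j + a = q \<and> n - 1 - a - r \<le> m)"
  proof
    assume "\<exists>s t. i = 1 + s + t \<and> j = a + t - s \<and> 0 \<le> s \<and> s < a \<and> 0 \<le> t \<and> t < n - 1 - a \<and>
      (s < q \<or> s = q \<and> n - 1 - a - r \<le> t)"
    then obtain s t where st: "i = 1 + s + t" "j = a + t - s" "0 \<le> s" "s < a" "0 \<le> t"
      "t < n - 1 - a" "s < q \<or> s = q \<and> n - 1 - a - r \<le> t" by blast
    then have "2 * m + e = 2 * t + 1" using me(1) by simp
    then have "e = 1" "m = t" using me(2) by presburger+
    with st show "e = 1 \<and> 0 \<le> m - j + a \<and> m - j + a < a \<and> 0 \<le> m \<and> m < n - 1 - a \<and>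
      (m - j + a < q \<or> m - j + a = q \<and> n - 1 - a - r \<le> m)" by auto
  next
    assume "e = 1 \<and> 0 \<le> m - j + a \<and> m - j + a < a \<and> 0 \<le> m \<and> m < n - 1 - a \<and>
      (m - j + a < q \<or> m - j + a = q \<and> n - 1 - a - r \<le> m)"
    with me(1) show "\<exists>s t. i = 1 + s + t \<and> j = a + t - s \<and> 0 \<le> s \<and> s < a \<and> 0 \<le> t \<and>
      t < n - 1 - a \<and> (s < q \<or> s = q \<and> n - 1 - a - r \<le> t)"
      by (intro exI[of _ "m - j + a"] exI[of _ m]) auto
  qed
  then show ?thesis
    using truncated_diamond_mixed_diff_neg_iff_parity[OF assms me] by simp
qed

lemma diamond_ASM_neg_entries:
  assumes "1 \<le> n" and "a = (n - 1) div 2" and "q \<le> a" and "r \<le> n - 1 - a"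
  shows "{(i, j). i < n \<and> j < n \<and> diamond_ASM n a q r i j = -1} =
    (\<lambda>(s, t). (1 + s + t, a + t - s)) ` {(s, t). s < a \<and> t < n - 1 - a \<and> (s < q \<or> s = q \<and> n - 1 - a - r \<le> t)}"
    (is "?N = ?\<phi> ` ?R")
proof -
  have entry: "diamond_ASM n a q r i j = -1 \<longleftrightarrow>
      (\<exists>s t. int i = 1 + s + t \<and> int j = int a + t - s \<and> 0 \<le> s \<and> s < int a \<and> 0 \<le> t \<and>
        t < int n - 1 - int a \<and> (s < int q \<or> s = int q \<and> int n - 1 - int a - int r \<le> t))"
    if "i < n" "j < n" for i j
  proof -
    have "diamond_ASM n a q r i j =
        truncated_diamond (int n) (int a) (int q) (int r) (int i + 1) (int j + 1)
      - truncated_diamond (int n) (int a) (int q) (int r) (int i) (int j + 1)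
      - truncated_diamond (int n) (int a) (int q) (int r) (int i + 1) (int j)
      + truncated_diamond (int n) (int a) (int q) (int r) (int i) (int j)"
      using that by (simp add: diamond_ASM_def corner_diff_def add.commute)
    moreover have "2 * int a \<le> int n - 1" "int n - 1 \<le> 2 * int a + 1"
      using assms(1,2) by presburger+
    moreover have "int r \<le> int n - 1 - int a"
    proof -
      have "a \<le> n - 1" using assms(2) by simp
      then show ?thesis using assms(1,4) by linarith
    qed
    ultimately show ?thesis
      using truncated_diamond_mixed_diff_neg_iff[of "int a" "int n" "int q" "int r" "int i" "int j"]
        assms(3) that by simp
  qed
  show ?thesis
  proof (intro equalityI subsetI)
    fix x assume "x \<in> ?N"
    then obtain i j where ij: "x = (i, j)" "i < n" "j < n" "diamond_ASM n a q r i j = -1" by blast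
    then obtain s t :: int where st: "int i = 1 + s + t" "int j = int a + t - s" "0 \<le> s" "s < int a"
      "0 \<le> t" "t < int n - 1 - int a" "s < int q \<or> s = int q \<and> int n - 1 - int a - int r \<le> t"
      using entry by blast
    obtain s' t' :: nat where st': "s = int s'" "t = int t'"
      using st(3,5) by (metis nonneg_int_cases)
    have "i = 1 + s' + t'" "j = a + t' - s'" "s' < a" "t' < n - 1 - a"
      using st st' by linarith+
    moreover have "s' < q \<or> s' = q \<and> n - 1 - a - r \<le> t'"
      using st(6,7) st' by linarith
    ultimately show "x \<in> ?\<phi> ` ?R" using ij(1) by (intro image_eqI[of _ _ "(s', t')"]) auto
  next
    fix x assume "x \<in> ?\<phi> ` ?R"
    then obtain s t where st: "x = (1 + s + t, a + t - s)" "s < a" "t < n - 1 - a"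
      "s < q \<or> s = q \<and> n - 1 - a - r \<le> t" by auto
    then have ij: "1 + s + t < n" "a + t - s < n" by linarith+
    have "int (1 + s + t) = 1 + int s + int t" "int (a + t - s) = int a + int t - int s"
      "int s < int a" "int t < int n - 1 - int a"
      "int s < int q \<or> int s = int q \<and> int n - 1 - int a - int r \<le> int t"
      "0 \<le> int s" "0 \<le> int t"
      using st by linarith+
    then have "diamond_ASM n a q r (1 + s + t) (a + t - s) = -1"
      using entry[OF ij] by blast
    with ij show "x \<in> ?N" using st(1) by blast
  qed
qed

lemma card_full_rows_and_partial_row:
  assumes "q \<le> a" and "r \<le> b" and "q = a \<longrightarrow> r = 0"
  shows "card {(s, t). s < a \<and> t < b \<and> (s < q \<or> s = q \<and> b - r \<le> t)} = q * b + r"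
proof -
  have "{(s, t). s < a \<and> t < b \<and> (s < q \<or> s = q \<and> b - r \<le> t)} = {..<q} \<times> {..<b} \<union> {q} \<times> {b - r..<b}"
    using assms by auto
  also have "card \<dots> = q * b + r"
    using assms(2) by (subst card_Un_disjoint) (auto simp: card_cartesian_product)
  finally show ?thesis .
qed

lemma floor_half_times_ceil_half: "m div 2 * (m - m div 2) = m\<^sup>2 div 4" for m :: nat
proof -
  have "m = 2 * (m div 2) \<or> m = 2 * (m div 2) + 1" by presburger
  then obtain k where "m = 2 * k \<or> m = 2 * k + 1" by blast
  then show ?thesis
  proof
    assume "m = 2 * k + 1"
    moreover have "(2 * k + 1)\<^sup>2 = 4 * (k * (k + 1)) + 1" by (simp add: power2_eq_square algebra_simps)
    ultimately show ?thesis by simp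
  qed (simp add: power2_eq_square)
qed

lemma div_mod_le_of_le_mult:
  fixes k a b :: nat
  assumes "k \<le> a * b"
  shows "k div b \<le> a" and "k mod b \<le> b" and "k div b = a \<longrightarrow> k mod b = 0"
proof -
  show "k div b \<le> a"
    using div_le_mono[OF assms, of b] by (cases "b = 0") simp_all
  show "k mod b \<le> b"
    using assms by (cases "b = 0") simp_all
  show "k div b = a \<longrightarrow> k mod b = 0"
    using assms div_mult_mod_eq[of k b] by (metis add_le_same_cancel1 le_zero_eq)
qed

lemma ex_ASM_with_io:
  assumes "k \<le> (n - 1)\<^sup>2 div 4"
  shows "\<exists>A. is_ASM n A \<and> io n A = k"
proof -
  define a b where "a = (n - 1) div 2" and "b = n - 1 - a"
  define q r where "q = k div b" and "r = k mod b"
  have "k \<le> a * b" using assms floor_half_times_ceil_half[of "n - 1"] by (simp add: a_def b_def)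
  note qr = div_mod_le_of_le_mult[OF this, folded q_def r_def]
  have "io n (diamond_ASM n a q r) = k"
  proof (cases "n = 0")
    case True
    then show ?thesis using assms by (simp add: io_def)
  next
    case False
    let ?R = "{(s, t). s < a \<and> t < b \<and> (s < q \<or> s = q \<and> b - r \<le> t)}"
    have "io n (diamond_ASM n a q r) = card ((\<lambda>(s, t). (1 + s + t, a + t - s)) ` ?R)"
      unfolding io_def using diamond_ASM_neg_entries[of n a q r] False qr(1,2)
      by (simp add: a_def b_def)
    also have "\<dots> = card ?R" by (intro card_image inj_onI) auto
    also have "\<dots> = q * b + r" using qr by (intro card_full_rows_and_partial_row)
    also have "\<dots> = k" by (simp add: q_def r_def)
    finally show ?thesis .
  qed
  then show ?thesis using is_ASM_diamond_ASM by blast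
qed

lemma io_image_ASMs: "io n ` ASMs n = {0..(n - 1)\<^sup>2 div 4}"
  using io_le_of_ASM ex_ASM_with_io by (fastforce simp: ASMs_def)

section \<open>The graded dimension\<close>

interpretation V: vector_space "fscale :: 'a::field \<Rightarrow> (mat \<Rightarrow> 'a) \<Rightarrow> mat \<Rightarrow> 'a"
  by (rule vector_space_fscale)

lemma sum_fun_apply: "sum g T x = (\<Sum>w\<in>T. g w x)"
  by (induction T rule: infinite_finite_induct) simp_all

lemma inj_on_if_separating_points:
  assumes "\<forall>i\<in>I. g i (p i) \<noteq> 0" and "\<forall>i\<in>I. \<forall>j\<in>I. j \<noteq> i \<longrightarrow> g j (p i) = 0"
  shows "inj_on g I"
  using assms by (intro inj_onI) metis

lemma independent_if_separating_points:
  fixes g :: "'i \<Rightarrow> mat \<Rightarrow> 'a::field"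
  assumes nonzero: "\<forall>i\<in>I. g i (p i) \<noteq> 0" and vanish: "\<forall>i\<in>I. \<forall>j\<in>I. j \<noteq> i \<longrightarrow> g j (p i) = 0"
  shows "V.independent (g ` I)"
proof
  assume "V.dependent (g ` I)"
  then obtain T u v where T: "finite T" "T \<subseteq> g ` I" "(\<Sum>w\<in>T. fscale (u w) w) = 0"
    and "v \<in> T" "u v \<noteq> 0"
    unfolding V.dependent_explicit by blast
  then obtain i where i: "i \<in> I" "v = g i" by blast
  have "0 = (\<Sum>w\<in>T. fscale (u w) w) (p i)" using T(3) by simp
  also have "\<dots> = (\<Sum>w\<in>T. u w * w (p i))" by (simp add: sum_fun_apply fscale_def)
  also have "\<dots> = u v * v (p i) + (\<Sum>w\<in>T - {v}. u w * w (p i))"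
    using T(1) \<open>v \<in> T\<close> by (rule sum.remove)
  also have "(\<Sum>w\<in>T - {v}. u w * w (p i)) = 0"
    using T(2) i vanish by (intro sum.neutral) fastforce
  finally show False using \<open>u v \<noteq> 0\<close> i nonzero by simp
qed

lemma F_apply: "F A B = (if B = A then 1 else 0)"
  by (simp add: F_def)

lemma dim_span_F: "V.dim (V.span (F ` S) :: (mat \<Rightarrow> 'a::field) set) = card S"
proof -
  have sep: "\<forall>A\<in>S. (F A :: mat \<Rightarrow> 'a) A \<noteq> 0" "\<forall>A\<in>S. \<forall>B\<in>S. B \<noteq> A \<longrightarrow> (F B :: mat \<Rightarrow> 'a) A = 0"
    by (simp_all add: F_apply)
  show ?thesis
    using V.dim_span_eq_card_independent[OF independent_if_separating_points[where p = "\<lambda>x. x", OF sep]]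
      card_image[OF inj_on_if_separating_points[where p = "\<lambda>x. x", OF sep]] by simp
qed

lemma dim_span_F_diff_same_class:
  assumes "finite S"
  shows "V.dim (V.span {F x - F y | x y. x \<in> S \<and> y \<in> S \<and> \<phi> x = \<phi> y} :: (mat \<Rightarrow> 'a::field) set)
    = card S - card (\<phi> ` S)"
proof -
  define rep where "rep = inv_into S \<phi>"
  define R where "R = rep ` \<phi> ` S"
  define g :: "mat \<Rightarrow> mat \<Rightarrow> 'a" where "g x = F x - F (rep (\<phi> x))" for x
  have rep: "rep (\<phi> x) \<in> S" "\<phi> (rep (\<phi> x)) = \<phi> x" if "x \<in> S" for x
    using that by (simp_all add: rep_def inv_into_into f_inv_into_f)
  have g_R: "g x = 0" if "x \<in> R" for x
    using that by (auto simp: R_def g_def rep)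
  have g_apply: "g y x = (if x = y then 1 else 0)" if "x \<in> S - R" "y \<in> S" for x y
    using that by (auto simp: g_def F_apply R_def)
  have sep: "\<forall>x\<in>S - R. g x x \<noteq> 0" "\<forall>x\<in>S - R. \<forall>y\<in>S - R. y \<noteq> x \<longrightarrow> g y x = 0"
    by (simp_all add: g_apply)
  have "V.span {F x - F y | x y. x \<in> S \<and> y \<in> S \<and> \<phi> x = \<phi> y} = V.span (g ` (S - R))"
  proof (rule V.span_eq[THEN iffD2], intro conjI subsetI)
    fix v :: "mat \<Rightarrow> 'a" assume "v \<in> {F x - F y | x y. x \<in> S \<and> y \<in> S \<and> \<phi> x = \<phi> y}"
    then obtain x y where xy: "v = F x - F y" "x \<in> S" "y \<in> S" "\<phi> x = \<phi> y" by blast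
    then have v: "v = g x - g y" by (simp add: g_def)
    have "g z \<in> V.span (g ` (S - R))" if "z \<in> S" for z
      using that g_R by (cases "z \<in> R") (auto intro: V.span_base V.span_zero)
    with v xy(2,3) show "v \<in> V.span (g ` (S - R))" by (simp add: V.span_diff)
  next
    fix v :: "mat \<Rightarrow> 'a" assume "v \<in> g ` (S - R)"
    then obtain x where "v = F x - F (rep (\<phi> x))" "x \<in> S" by (auto simp: g_def)
    then show "v \<in> V.span {F x - F y | x y. x \<in> S \<and> y \<in> S \<and> \<phi> x = \<phi> y}"
      using rep by (intro V.span_base) fastforce
  qed
  moreover have "card (g ` (S - R)) = card S - card (\<phi> ` S)"
  proof -
    have "inj_on rep (\<phi> ` S)" by (simp add: rep_def inj_on_inv_into)
    then have "card R = card (\<phi> ` S)" by (simp add: R_def card_image)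
    moreover have "R \<subseteq> S" using rep by (auto simp: R_def)
    ultimately show ?thesis
      using card_image[OF inj_on_if_separating_points[where p = "\<lambda>x. x", OF sep]] card_Diff_subset[of R S] assms
      by (simp add: finite_subset)
  qed
  ultimately show ?thesis
    using V.dim_span_eq_card_independent[OF independent_if_separating_points[where p = "\<lambda>x. x", OF sep]]
    by simp
qed

lemma finite_ASMs: "finite (ASMs n)"
proof -
  define Rows where "Rows = {f :: nat \<Rightarrow> int. \<forall>j. (j \<in> {..<n} \<longrightarrow> f j \<in> {0, 1, -1}) \<and> (j \<notin> {..<n} \<longrightarrow> f j = 0)}"
  have "finite Rows" unfolding Rows_def by (intro finite_set_of_finite_funs) auto
  then have "finite {A. \<forall>i. (i \<in> {..<n} \<longrightarrow> A i \<in> Rows) \<and> (i \<notin> {..<n} \<longrightarrow> A i = (\<lambda>_. 0))}"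
    by (intro finite_set_of_finite_funs) auto
  moreover have "ASMs n \<subseteq> {A. \<forall>i. (i \<in> {..<n} \<longrightarrow> A i \<in> Rows) \<and> (i \<notin> {..<n} \<longrightarrow> A i = (\<lambda>_. 0))}"
    by (auto simp: ASMs_def is_ASM_def Rows_def)
  ultimately show ?thesis by (rule finite_subset[rotated])
qed

lemma quot_dim_eq_card_io_image: "quot_dim TYPE('a::field) n = card (io n ` ASMs n)"
  unfolding quot_dim_def ASM_comp_def Iio_comp_def dim_span_F
    dim_span_F_diff_same_class[OF finite_ASMs, of n "io n"]
  using card_image_le[OF finite_ASMs, of "io n" n] by simp

theorem proposition4p6:
  fixes n :: nat
  shows "quot_dim TYPE('k::field_char_0) n = nat (((int n - 1)^2) div 4) + 1"
proof -
  have "nat ((int n - 1)\<^sup>2 div 4) = (n - 1)\<^sup>2 div 4"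
    by (cases n) (simp_all add: nat_div_distrib nat_power_eq)
  then show ?thesis by (simp add: quot_dim_eq_card_io_image io_image_ASMs)
qed

end
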